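(* Let $\alpha = \frac{P}{4Q}$ where $P$ is an odd integer and $Q$ is a positive integer with $P$ and $Q$ relatively prime, and let $|\phi\rangle \in \mathbb{C}^2$ be any normalized coin state. Then the inhomogeneous quantum walk with parameter $\alpha$ started from $|0,\phi\rangle$ is restricted to the finite interval $[-Q,Q]$: for every time $t \ge 0$ and every $n \in \mathbb{Z}$ with $|n| > Q$, $\Pr(n;t) = 0$.
   Context: The Hilbert space is $\ell^2(\mathbb{Z}) \otimes \mathbb{C}^2$ with orthonormal basis $|n,\xi\rangle = |n\rangle \otimes |\xi\rangle$, $n \in \mathbb{Z}$, $\xi \in \{L,R\}$, where $|L\rangle = (1,0)^T$, $|R\rangle = (0,1)^T$. The shift operator is $W = \sum_n \left( |n-1,L\rangle\langle n,L| + |n+1,R\rangle\langle n,R| \right)$. For $\alpha \in \mathbb{R}$, the coin operator is $C = \sum_n |n\rangle\langle n| \otimes \hat C_n$ with $\hat C_n = \begin{pmatrix} \cos(2\pi\alpha n) & -\sin(2\pi\alpha n) \\ \sin(2\pi\alpha n) & \cos(2\pi\alpha n)\end{pmatrix}$. The one-step evolution of the inhomogeneous quantum walk is $WC$, and starting from $|0,\phi\rangle$ the probability of being at position $n$ at time $t$ is $\Pr(n;t) = \sum_{\xi \in \{L,R\}} |\langle n,\xi| (WC)^t |0,\phi\rangle|^2$. *)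

theory Defs
  imports Complex_Main
begin

text \<open>States of the walk: psi n = (amplitude at |n,L>, amplitude at |n,R>).\<close>
type_synonym qstate = "int \<Rightarrow> complex \<times> complex"

definition theta :: "real \<Rightarrow> int \<Rightarrow> real" where
  "theta \<alpha> n = 2 * pi * \<alpha> * real_of_int n"

definition coin_op :: "real \<Rightarrow> qstate \<Rightarrow> qstate" where
  "coin_op \<alpha> \<psi> n =
     (let c = complex_of_real (cos (theta \<alpha> n)); s = complex_of_real (sin (theta \<alpha> n));
          a = fst (\<psi> n); b = snd (\<psi> n)
      in (c * a - s * b, s * a + c * b))"

text \<open>Shift W: |n,L> to |n-1,L>, |n,R> to |n+1,R>.\<close>
definition shift_op :: "qstate \<Rightarrow> qstate" where
  "shift_op \<psi> n = (fst (\<psi> (n + 1)), snd (\<psi> (n - 1)))"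

definition walk_step :: "real \<Rightarrow> qstate \<Rightarrow> qstate" where
  "walk_step \<alpha> \<psi> = shift_op (coin_op \<alpha> \<psi>)"

definition walk :: "real \<Rightarrow> complex \<times> complex \<Rightarrow> nat \<Rightarrow> qstate" where
  "walk \<alpha> \<phi> t = (walk_step \<alpha> ^^ t) (\<lambda>n. if n = 0 then \<phi> else (0, 0))"

definition prob :: "real \<Rightarrow> complex \<times> complex \<Rightarrow> int \<Rightarrow> nat \<Rightarrow> real" where
  "prob \<alpha> \<phi> n t = (cmod (fst (walk \<alpha> \<phi> t n)))\<^sup>2 + (cmod (snd (walk \<alpha> \<phi> t n)))\<^sup>2"

end

theory Submission
  imports Defs
begin

text \<open>At the sites \<open>\<plusminus>Q\<close> the coin angle \<open>2\<pi>\<alpha>(\<plusminus>Q) = \<plusminus>P\<pi>/2\<close> is an odd multiple of \<open>\<pi>/2\<close>,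
  so the coin there is a pure swap of the chirality: a right-mover reaching \<open>Q\<close> is turned
  into a left-mover and sent back, and symmetrically at \<open>-Q\<close>. Hence the left-moving amplitude
  stays supported in \<open>[-Q, Q-1]\<close> and the right-moving one in \<open>[-Q+1, Q]\<close> at all times.\<close>

definition confined :: "int \<Rightarrow> qstate \<Rightarrow> bool" where
  "confined Q \<psi> \<longleftrightarrow>
     (\<forall>m. m \<ge> Q \<or> m < -Q \<longrightarrow> fst (\<psi> m) = 0) \<and> (\<forall>m. m \<le> -Q \<or> m > Q \<longrightarrow> snd (\<psi> m) = 0)"

lemma confined_outside:
  assumes "confined Q \<psi>" and "\<bar>m\<bar> > Q"
  shows "\<psi> m = (0, 0)"
proof -
  have "m > Q \<or> m < -Q"
    using assms(2) by linarith
  then show ?thesis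
    using assms(1) unfolding confined_def prod_eq_iff by auto
qed

lemma theta_uminus: "theta \<alpha> (-n) = - theta \<alpha> n"
  by (simp add: theta_def)

lemma cos_theta_boundary:
  fixes P Q :: int
  assumes "odd P" and "Q \<noteq> 0"
  shows "cos (theta (of_int P / (4 * of_int Q)) Q) = 0"
proof -
  have "theta (of_int P / (4 * of_int Q)) Q = of_int P * (pi / 2)"
    using assms(2) by (simp add: theta_def field_simps)
  then show ?thesis
    unfolding cos_zero_iff_int using assms(1) by blast
qed

lemma fst_coin_op_eq_0:
  assumes "cos (theta \<alpha> m) = 0 \<or> fst (\<psi> m) = 0" and "snd (\<psi> m) = 0"
  shows "fst (coin_op \<alpha> \<psi> m) = 0"
  using assms by (auto simp: coin_op_def Let_def)

lemma snd_coin_op_eq_0: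
  assumes "cos (theta \<alpha> m) = 0 \<or> snd (\<psi> m) = 0" and "fst (\<psi> m) = 0"
  shows "snd (coin_op \<alpha> \<psi> m) = 0"
  using assms by (auto simp: coin_op_def Let_def)

lemma confined_walk_step:
  assumes "cos (theta \<alpha> Q) = 0" and "cos (theta \<alpha> (-Q)) = 0" and "confined Q \<psi>"
  shows "confined Q (walk_step \<alpha> \<psi>)"
  unfolding confined_def
proof (intro conjI allI impI)
  fix m assume m: "m \<ge> Q \<or> m < -Q"
  have "cos (theta \<alpha> (m + 1)) = 0 \<or> fst (\<psi> (m + 1)) = 0"
    using m assms by (cases "m + 1 = -Q") (auto simp: confined_def)
  moreover have "snd (\<psi> (m + 1)) = 0"
    using m assms by (auto simp: confined_def)
  ultimately show "fst (walk_step \<alpha> \<psi> m) = 0"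
    by (simp add: walk_step_def shift_op_def fst_coin_op_eq_0)
next
  fix m assume m: "m \<le> -Q \<or> m > Q"
  have "cos (theta \<alpha> (m - 1)) = 0 \<or> snd (\<psi> (m - 1)) = 0"
    using m assms by (cases "m - 1 = Q") (auto simp: confined_def)
  moreover have "fst (\<psi> (m - 1)) = 0"
    using m assms by (auto simp: confined_def)
  ultimately show "snd (walk_step \<alpha> \<psi> m) = 0"
    by (simp add: walk_step_def shift_op_def snd_coin_op_eq_0)
qed

lemma walk_Suc: "walk \<alpha> \<phi> (Suc t) = walk_step \<alpha> (walk \<alpha> \<phi> t)"
  by (simp add: walk_def)

lemma confined_walk:
  assumes "Q > 0" and "cos (theta \<alpha> Q) = 0" and "cos (theta \<alpha> (-Q)) = 0"
  shows "confined Q (walk \<alpha> \<phi> t)"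
proof (induction t)
  case 0
  show ?case using assms(1) by (simp add: walk_def confined_def)
next
  case (Suc t)
  then show ?case
    using confined_walk_step assms by (simp add: walk_Suc)
qed

theorem lemma1:
  fixes P Q :: int and \<phi> :: "complex \<times> complex" and t :: nat and n :: int
  assumes "odd P" and "Q > 0" and "coprime P Q"
    and "(cmod (fst \<phi>))\<^sup>2 + (cmod (snd \<phi>))\<^sup>2 = 1"
    and "\<bar>n\<bar> > Q"
  shows "prob (real_of_int P / (4 * real_of_int Q)) \<phi> n t = 0"
proof -
  define \<alpha> where "\<alpha> = real_of_int P / (4 * real_of_int Q)"
  have "cos (theta \<alpha> Q) = 0" and "cos (theta \<alpha> (-Q)) = 0"
    using cos_theta_boundary[OF \<open>odd P\<close>] \<open>Q > 0\<close> by (simp_all add: \<alpha>_def theta_uminus)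
  then have "confined Q (walk \<alpha> \<phi> t)"
    using confined_walk \<open>Q > 0\<close> by blast
  then have "walk \<alpha> \<phi> t n = (0, 0)"
    using confined_outside \<open>\<bar>n\<bar> > Q\<close> by blast
  then show ?thesis
    by (simp add: prob_def \<alpha>_def[symmetric])
qed

end
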